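(* Let $n\ge 3$ and let $\Delta=\Delta_{J(K_n)}$ be the simplicial complex on the vertex set $\{[ij]\mid 1\le i<j\le n\}$ (the edges of the complete graph $K_n$) whose Stanley–Reisner ideal is \[J(K_n)=\langle x_{ij}x_{kl},\ x_{ij}x_{ik}x_{jk}\mid i,j,k,l\text{ distinct}\rangle\subseteq \Bbbk[x_{ij}\mid 1\le i<j\le n].\] Then $\Delta$ consists of $n$ simplices of dimension $n-2$ (its facets), each meeting the others in $n-1$ vertices, and its face polynomial is \[f(\Delta,x)=x^{n-1}+n\Big((n-1)x^{n-2}+\binom{n-1}2x^{n-3}+\binom{n-1}3x^{n-4}+\cdots+(n-1)x+1\Big)-\binom n2x^{n-2}.\]
   Context: The Stanley–Reisner ideal of a simplicial complex $\Delta$ is generated by the monomials $\prod_{v\in\sigma}x_v$ for non-faces $\sigma$ of $\Delta$. For a simplicial complex $\Delta$ of dimension $\delta-1$ with $f_{i}$ faces of dimension $i$ ($f_{-1}=1$ for the empty face), the face polynomial is $f(\Delta,x)=\sum_{i=0}^{\delta}f_{i-1}x^{\delta-i}$. Here $x_{ji}:=x_{ij}$. *)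

theory Defs
  imports "HOL-Computational_Algebra.Polynomial"
begin

definition Kn_edges :: "nat \<Rightarrow> nat set set" where
  "Kn_edges n = {{i, j} | i j. 1 \<le> i \<and> i < j \<and> j \<le> n}"

text \<open>Supports of the monomial generators of J(K_n):
  x_ij x_kl (i,j,k,l distinct) and x_ij x_ik x_jk (i,j,k distinct).\<close>
definition JKn_gens :: "nat \<Rightarrow> nat set set set" where
  "JKn_gens n =
     {{{i, j}, {k, l}} | i j k l. {i, j, k, l} \<subseteq> {1..n} \<and> distinct [i, j, k, l]} \<union>
     {{{i, j}, {i, k}, {j, k}} | i j k. {i, j, k} \<subseteq> {1..n} \<and> distinct [i, j, k]}"

text \<open>Simplicial complex on vertex set V whose Stanley--Reisner ideal is generated by the
  squarefree monomials with supports in G: a subset is a face iff its squarefree monomial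
  is not in the ideal, i.e. iff it contains no generator support.\<close>
definition sr_complex :: "'v set \<Rightarrow> 'v set set \<Rightarrow> 'v set set" where
  "sr_complex V G = {\<sigma>. \<sigma> \<subseteq> V \<and> (\<forall>g\<in>G. \<not> g \<subseteq> \<sigma>)}"

definition facets :: "'v set set \<Rightarrow> 'v set set" where
  "facets \<Delta> = {F \<in> \<Delta>. \<forall>G\<in>\<Delta>. F \<subseteq> G \<longrightarrow> G = F}"

text \<open>delta = dim + 1 = maximal number of vertices of a face; f_{i-1} = number of faces with
  i vertices; f(Delta,x) = sum_{i=0}^{delta} f_{i-1} x^{delta-i}.\<close>
definition face_poly :: "'v set set \<Rightarrow> int poly" where
  "face_poly \<Delta> = (let \<delta> = Max (card ` \<Delta>) in
     (\<Sum>i = 0..\<delta>. monom (int (card {\<sigma>\<in>\<Delta>. card \<sigma> = i})) (\<delta> - i)))"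

end

(* A set of edges of K_n is a face of Delta iff it contains neither two disjoint edges nor a
   triangle. A pairwise intersecting, triangle-free family of edges has a common vertex, so Delta
   is generated by the n vertex stars, each consisting of n - 1 edges. Two stars share exactly the
   edge joining their centres; hence every edge of a star lies in another star, and every face
   with k >= 2 edges lies in a unique star, giving n * binom(n - 1, k) faces of size k, while
   there is one empty face and binom(n, 2) faces of size 1. The -binom(n, 2) x^(n-2) in the
   formula corrects the k = 1 term n (n - 1) x^(n-2) = 2 binom(n, 2) x^(n-2). *)

theory Submission
  imports Defs
begin

definition down_closure :: "'a set set \<Rightarrow> 'a set set" where
  "down_closure \<F> = {\<sigma>. \<exists>F\<in>\<F>. \<sigma> \<subseteq> F}"

lemma facets_down_closure:
  assumes "\<And>F G. F \<in> \<F> \<Longrightarrow> G \<in> \<F> \<Longrightarrow> F \<subseteq> G \<Longrightarrow> F = G"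
  shows "facets (down_closure \<F>) = \<F>"
  using assms unfolding facets_def down_closure_def by blast

lemma finite_down_closure:
  assumes "finite \<F>" "\<And>F. F \<in> \<F> \<Longrightarrow> finite F"
  shows "finite (down_closure \<F>)"
proof -
  have "down_closure \<F> \<subseteq> (\<Union>F\<in>\<F>. Pow F)"
    unfolding down_closure_def by blast
  then show ?thesis
    using assms by (simp add: finite_subset)
qed

lemma Max_card_down_closure:
  assumes "finite \<F>" "\<F> \<noteq> {}" "\<And>F. F \<in> \<F> \<Longrightarrow> finite F \<and> card F = m"
  shows "Max (card ` down_closure \<F>) = m"
proof (rule Max_eqI)
  show "finite (card ` down_closure \<F>)"
    using assms finite_down_closure by blast
  show "k \<le> m" if "k \<in> card ` down_closure \<F>" for k
    using that assms(3) card_mono unfolding down_closure_def by fastforce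
  obtain F where "F \<in> \<F>" using assms(2) by blast
  then show "m \<in> card ` down_closure \<F>"
    using assms(3) unfolding down_closure_def by blast
qed

lemma card_down_closure_size_0:
  assumes "\<F> \<noteq> {}" "\<And>F. F \<in> \<F> \<Longrightarrow> finite F"
  shows "card {\<sigma> \<in> down_closure \<F>. card \<sigma> = 0} = 1"
proof -
  have "finite \<sigma>" if "\<sigma> \<in> down_closure \<F>" for \<sigma>
    using that assms(2) finite_subset unfolding down_closure_def by blast
  moreover have "{} \<in> down_closure \<F>"
    using assms(1) unfolding down_closure_def by blast
  ultimately have "{\<sigma> \<in> down_closure \<F>. card \<sigma> = 0} = {{}}"
    by auto
  then show ?thesis by simp
qed

lemma card_down_closure_size_1:
  "card {\<sigma> \<in> down_closure \<F>. card \<sigma> = 1} = card (\<Union>\<F>)"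
proof -
  have "{\<sigma> \<in> down_closure \<F>. card \<sigma> = 1} = (\<lambda>v. {v}) ` \<Union>\<F>"
  proof (intro set_eqI iffI)
    fix \<sigma> assume "\<sigma> \<in> {\<sigma> \<in> down_closure \<F>. card \<sigma> = 1}"
    then obtain v where "\<sigma> = {v}" "{v} \<in> down_closure \<F>"
      by (auto simp: card_1_singleton_iff)
    then show "\<sigma> \<in> (\<lambda>v. {v}) ` \<Union>\<F>"
      unfolding down_closure_def by auto
  next
    fix \<sigma> assume "\<sigma> \<in> (\<lambda>v. {v}) ` \<Union>\<F>"
    then show "\<sigma> \<in> {\<sigma> \<in> down_closure \<F>. card \<sigma> = 1}"
      unfolding down_closure_def by auto
  qed
  then show ?thesis
    by (simp add: card_image)
qed

lemma card_down_closure_size_ge_2: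
  assumes "finite \<F>" "\<And>F. F \<in> \<F> \<Longrightarrow> finite F \<and> card F = m"
    and "\<And>F G. F \<in> \<F> \<Longrightarrow> G \<in> \<F> \<Longrightarrow> F \<noteq> G \<Longrightarrow> card (F \<inter> G) \<le> 1"
    and "k \<ge> 2"
  shows "card {\<sigma> \<in> down_closure \<F>. card \<sigma> = k} = card \<F> * (m choose k)"
proof -
  have "{\<sigma> \<in> down_closure \<F>. card \<sigma> = k} = (\<Union>F\<in>\<F>. {\<sigma>. \<sigma> \<subseteq> F \<and> card \<sigma> = k})"
    unfolding down_closure_def by blast
  also have "card \<dots> = (\<Sum>F\<in>\<F>. card {\<sigma>. \<sigma> \<subseteq> F \<and> card \<sigma> = k})"
  proof (rule card_UN_disjoint)
    show "finite \<F>" by fact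
    show "\<forall>F\<in>\<F>. finite {\<sigma>. \<sigma> \<subseteq> F \<and> card \<sigma> = k}"
      using assms(2) by simp
    show "\<forall>F\<in>\<F>. \<forall>G\<in>\<F>. F \<noteq> G \<longrightarrow>
        {\<sigma>. \<sigma> \<subseteq> F \<and> card \<sigma> = k} \<inter> {\<sigma>. \<sigma> \<subseteq> G \<and> card \<sigma> = k} = {}"
    proof (intro ballI impI)
      fix F G assume FG: "F \<in> \<F>" "G \<in> \<F>" "F \<noteq> G"
      have "card \<sigma> \<noteq> k" if "\<sigma> \<subseteq> F" "\<sigma> \<subseteq> G" for \<sigma>
      proof -
        have "card \<sigma> \<le> card (F \<inter> G)"
          using that FG(1) assms(2) by (intro card_mono) auto
        also have "\<dots> \<le> 1" using assms(3) FG .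
        finally show ?thesis using assms(4) by linarith
      qed
      then show "{\<sigma>. \<sigma> \<subseteq> F \<and> card \<sigma> = k} \<inter> {\<sigma>. \<sigma> \<subseteq> G \<and> card \<sigma> = k} = {}"
        by blast
    qed
  qed
  also have "\<dots> = (\<Sum>F\<in>\<F>. m choose k)"
    using assms(2) by (intro sum.cong) (simp_all add: n_subsets)
  also have "\<dots> = card \<F> * (m choose k)"
    by simp
  finally show ?thesis .
qed

lemma face_poly_down_closure:
  assumes "finite \<F>" "\<F> \<noteq> {}" "\<And>F. F \<in> \<F> \<Longrightarrow> finite F \<and> card F = m"
    and "\<And>F G. F \<in> \<F> \<Longrightarrow> G \<in> \<F> \<Longrightarrow> F \<noteq> G \<Longrightarrow> card (F \<inter> G) \<le> 1"
    and "m \<ge> 1"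
  shows "face_poly (down_closure \<F>) = monom 1 m + monom (int (card (\<Union>\<F>))) (m - 1)
    + (\<Sum>k = 2..m. monom (int (card \<F> * (m choose k))) (m - k))"
proof -
  define f where "f k = monom (int (card {\<sigma> \<in> down_closure \<F>. card \<sigma> = k})) (m - k)" for k
  have "face_poly (down_closure \<F>) = (\<Sum>k = 0..m. f k)"
    using Max_card_down_closure[OF assms(1-3)] by (simp add: face_poly_def f_def)
  also have "\<dots> = f 0 + f 1 + (\<Sum>k = 2..m. f k)"
    using assms(5) by (simp add: sum.atLeast_Suc_atMost numeral_2_eq_2 add.assoc)
  also have "(\<Sum>k = 2..m. f k) = (\<Sum>k = 2..m. monom (int (card \<F> * (m choose k))) (m - k))"
    unfolding f_def using assms(1,3,4) by (intro sum.cong) (simp_all add: card_down_closure_size_ge_2)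
  also have "f 0 = monom 1 m"
    unfolding f_def using assms(2,3) by (simp add: card_down_closure_size_0)
  also have "f 1 = monom (int (card (\<Union>\<F>))) (m - 1)"
    unfolding f_def card_down_closure_size_1 ..
  finally show ?thesis .
qed

lemma smult_sum_right: "smult c (\<Sum>k\<in>A. f k) = (\<Sum>k\<in>A. smult c (f k))"
  by (induction A rule: infinite_finite_induct) (simp_all add: smult_add_right)

lemma smult_sum_monom_choose_split:
  assumes "n \<ge> 2"
  shows "smult (int n) (\<Sum>k = 1..n - 1. monom (int ((n - 1) choose k)) (n - 1 - k))
    = monom (int (2 * (n choose 2))) (n - 2)
      + (\<Sum>k = 2..n - 1. monom (int (n * ((n - 1) choose k))) (n - 1 - k))"
proof -
  have "smult (int n) (\<Sum>k = 1..n - 1. monom (int ((n - 1) choose k)) (n - 1 - k))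
      = (\<Sum>k = 1..n - 1. monom (int (n * ((n - 1) choose k))) (n - 1 - k))"
    unfolding smult_sum_right smult_monom by simp
  also have "\<dots> = monom (int (n * (n - 1))) (n - 2)
      + (\<Sum>k = 2..n - 1. monom (int (n * ((n - 1) choose k))) (n - 1 - k))"
    using assms by (simp add: sum.atLeast_Suc_atMost numeral_2_eq_2)
  also have "n * (n - 1) = 2 * (n choose 2)"
    using times_binomial_minus1_eq[of 2 n] by simp
  finally show ?thesis .
qed

lemma intersecting_triangle_free_common_vertex:
  assumes two: "\<And>e. e \<in> \<sigma> \<Longrightarrow> card e = 2"
    and intersecting: "\<And>e f. e \<in> \<sigma> \<Longrightarrow> f \<in> \<sigma> \<Longrightarrow> e \<inter> f \<noteq> {}"
    and triangle_free: "\<And>a b c. distinct [a, b, c] \<Longrightarrow> \<not> {{a, b}, {a, c}, {b, c}} \<subseteq> \<sigma>"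
    and "e \<in> \<sigma>"
  shows "\<exists>v. \<forall>f\<in>\<sigma>. v \<in> f"
proof -
  obtain a b where ab: "e = {a, b}" "a \<noteq> b"
    using two[OF \<open>e \<in> \<sigma>\<close>] by (auto simp: card_2_iff)
  show ?thesis
  proof (cases "\<forall>f\<in>\<sigma>. a \<in> f")
    case True
    then show ?thesis by blast
  next
    case False
    then obtain f where f: "f \<in> \<sigma>" "a \<notin> f" by blast
    then have "b \<in> f"
      using intersecting[OF \<open>e \<in> \<sigma>\<close> f(1)] ab(1) by blast
    then obtain c where c: "f = {b, c}" "c \<noteq> b"
      using two[OF f(1)] by (auto simp: card_2_iff doubleton_eq_iff)
    have "c \<noteq> a" using c(1) f(2) by blast
    have "b \<in> g" if g: "g \<in> \<sigma>" for g
    proof (rule ccontr)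
      \<comment> \<open>an edge avoiding b meets e in a and f in c, closing the triangle abc\<close>
      assume "b \<notin> g"
      then have "a \<in> g" "c \<in> g"
        using intersecting[OF \<open>e \<in> \<sigma>\<close> g] intersecting[OF f(1) g] ab(1) c(1) by blast+
      then have "g = {a, c}"
        using two[OF g] \<open>c \<noteq> a\<close> by (auto simp: card_2_iff)
      then have "{{a, b}, {a, c}, {b, c}} \<subseteq> \<sigma>"
        using g f(1) c(1) \<open>e \<in> \<sigma>\<close> ab(1) by blast
      then show False
        using triangle_free[of a b c] ab(2) c(2) \<open>c \<noteq> a\<close> by auto
    qed
    then show ?thesis by blast
  qed
qed

definition vertex_star :: "nat \<Rightarrow> nat \<Rightarrow> nat set set" where
  "vertex_star n v = {e \<in> Kn_edges n. v \<in> e}"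

lemma doubleton_in_Kn_edges:
  assumes "a \<noteq> b" "a \<in> {1..n}" "b \<in> {1..n}"
  shows "{a, b} \<in> Kn_edges n"
proof (cases "a < b")
  case True
  then show ?thesis using assms unfolding Kn_edges_def by auto
next
  case False
  then have "b < a" "{a, b} = {b, a}" using assms(1) by auto
  then show ?thesis using assms unfolding Kn_edges_def
    by (intro CollectI exI[of _ b] exI[of _ a]) auto
qed

lemma Kn_edgesE:
  assumes "e \<in> Kn_edges n"
  obtains a b where "e = {a, b}" "a \<noteq> b" "a \<in> {1..n}" "b \<in> {1..n}"
  using assms unfolding Kn_edges_def by auto

lemma mem_Kn_edges_iff: "e \<in> Kn_edges n \<longleftrightarrow> e \<subseteq> {1..n} \<and> card e = 2"
proof
  assume "e \<in> Kn_edges n"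
  then show "e \<subseteq> {1..n} \<and> card e = 2"
    by (auto elim: Kn_edgesE)
next
  assume e: "e \<subseteq> {1..n} \<and> card e = 2"
  then obtain a b where "e = {a, b}" "a \<noteq> b"
    by (auto simp: card_2_iff)
  with e show "e \<in> Kn_edges n"
    by (simp add: doubleton_in_Kn_edges)
qed

lemma card_Kn_edges: "card (Kn_edges n) = n choose 2"
proof -
  have "Kn_edges n = {e. e \<subseteq> {1..n} \<and> card e = 2}"
    using mem_Kn_edges_iff by blast
  then show ?thesis
    using n_subsets[of "{1..n}" 2] by simp
qed

lemma finite_Kn_edges: "finite (Kn_edges n)"
proof -
  have "Kn_edges n \<subseteq> Pow {1..n}"
    using mem_Kn_edges_iff by blast
  then show ?thesis
    by (rule finite_subset) simp
qed

lemma vertex_star_eq_image: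
  assumes "v \<in> {1..n}"
  shows "vertex_star n v = (\<lambda>w. {v, w}) ` ({1..n} - {v})"
proof (intro set_eqI iffI)
  fix e assume e: "e \<in> vertex_star n v"
  then obtain a b where ab: "e = {a, b}" "a \<noteq> b" "a \<in> {1..n}" "b \<in> {1..n}"
    unfolding vertex_star_def by (auto elim: Kn_edgesE)
  have "v \<in> e" using e unfolding vertex_star_def by simp
  then consider "v = a" | "v = b" using ab(1) by blast
  then show "e \<in> (\<lambda>w. {v, w}) ` ({1..n} - {v})"
    using ab by cases (auto simp: insert_commute)
next
  fix e assume "e \<in> (\<lambda>w. {v, w}) ` ({1..n} - {v})"
  then show "e \<in> vertex_star n v"
    using assms unfolding vertex_star_def by (auto intro: doubleton_in_Kn_edges)
qed

lemma card_vertex_star: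
  assumes "v \<in> {1..n}"
  shows "card (vertex_star n v) = n - 1"
proof -
  have "inj_on (\<lambda>w. {v, w}) ({1..n} - {v})"
    by (rule inj_onI) (auto simp: doubleton_eq_iff)
  then show ?thesis
    using assms by (simp add: vertex_star_eq_image card_image)
qed

lemma finite_vertex_star: "finite (vertex_star n v)"
  unfolding vertex_star_def using finite_Kn_edges by simp

lemma Union_vertex_star: "\<Union>(vertex_star n ` {1..n}) = Kn_edges n"
proof
  show "Kn_edges n \<subseteq> \<Union>(vertex_star n ` {1..n})"
  proof
    fix e assume "e \<in> Kn_edges n"
    then obtain a b where "e = {a, b}" "a \<in> {1..n}"
      by (auto elim: Kn_edgesE)
    with \<open>e \<in> Kn_edges n\<close> show "e \<in> \<Union>(vertex_star n ` {1..n})"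
      unfolding vertex_star_def by blast
  qed
qed (auto simp: vertex_star_def)

lemma vertex_star_Int:
  assumes "v \<in> {1..n}" "w \<in> {1..n}" "v \<noteq> w"
  shows "vertex_star n v \<inter> vertex_star n w = {{v, w}}"
proof
  show "vertex_star n v \<inter> vertex_star n w \<subseteq> {{v, w}}"
    using assms(3) unfolding vertex_star_def by (auto elim!: Kn_edgesE)
  show "{{v, w}} \<subseteq> vertex_star n v \<inter> vertex_star n w"
    using assms unfolding vertex_star_def by (simp add: doubleton_in_Kn_edges)
qed

lemma vertex_star_subset_imp_eq:
  assumes "n \<ge> 3" "v \<in> {1..n}" "w \<in> {1..n}" "vertex_star n v \<subseteq> vertex_star n w"
  shows "v = w"
proof (rule ccontr)
  assume "v \<noteq> w"
  then have "vertex_star n v = {{v, w}}"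
    using vertex_star_Int[OF assms(2,3)] assms(4) by blast
  then show False
    using card_vertex_star[OF assms(2)] assms(1) by simp
qed

lemma vertex_star_subset_Union_others:
  assumes "n \<ge> 3" "v \<in> {1..n}"
  shows "vertex_star n v \<subseteq> \<Union>(vertex_star n ` {1..n} - {vertex_star n v})"
proof
  fix e assume "e \<in> vertex_star n v"
  then obtain w where w: "w \<in> {1..n}" "w \<noteq> v" "e = {v, w}"
    using vertex_star_eq_image[OF assms(2)] by blast
  then have "e \<in> vertex_star n w"
    using vertex_star_Int[OF assms(2) w(1)] by blast
  moreover have "vertex_star n w \<noteq> vertex_star n v"
    using vertex_star_subset_imp_eq[OF assms(1) w(1) assms(2)] w(2) by blast
  ultimately show "e \<in> \<Union>(vertex_star n ` {1..n} - {vertex_star n v})"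
    using w(1) by blast
qed

lemma disjoint_edges_in_JKn_gens:
  assumes "e \<in> Kn_edges n" "f \<in> Kn_edges n" "e \<inter> f = {}"
  shows "{e, f} \<in> JKn_gens n"
proof -
  obtain a b where e: "e = {a, b}" "a \<noteq> b" "a \<in> {1..n}" "b \<in> {1..n}"
    using assms(1) by (rule Kn_edgesE)
  obtain c d where f: "f = {c, d}" "c \<noteq> d" "c \<in> {1..n}" "d \<in> {1..n}"
    using assms(2) by (rule Kn_edgesE)
  have abcd: "distinct [a, b, c, d]" "{a, b, c, d} \<subseteq> {1..n}"
    using assms(3) e f by auto
  show ?thesis
    unfolding JKn_gens_def e(1) f(1)
    by (rule UnI1, rule CollectI, rule exI[of _ a], rule exI[of _ b], rule exI[of _ c],
        rule exI[of _ d]) (use abcd in auto)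
qed

lemma triangle_in_JKn_gens:
  assumes "distinct [a, b, c]" "{a, b, c} \<subseteq> {1..n}"
  shows "{{a, b}, {a, c}, {b, c}} \<in> JKn_gens n"
  unfolding JKn_gens_def
  by (rule UnI2, rule CollectI, rule exI[of _ a], rule exI[of _ b], rule exI[of _ c])
    (use assms in auto)

lemma JKn_gen_not_subset_vertex_star:
  assumes "g \<in> JKn_gens n"
  shows "\<not> g \<subseteq> vertex_star n v"
proof
  assume "g \<subseteq> vertex_star n v"
  then have "\<forall>e\<in>g. v \<in> e"
    unfolding vertex_star_def by blast
  with assms show False
    unfolding JKn_gens_def
  proof (elim UnE CollectE exE conjE)
    fix a b c d assume "g = {{a, b}, {c, d}}" "distinct [a, b, c, d]" "\<forall>e\<in>g. v \<in> e"
    then show False by auto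
  next
    fix a b c assume "g = {{a, b}, {a, c}, {b, c}}" "distinct [a, b, c]" "\<forall>e\<in>g. v \<in> e"
    then show False by auto
  qed
qed

lemma sr_complex_JKn_eq_down_closure:
  assumes "n \<ge> 1"
  shows "sr_complex (Kn_edges n) (JKn_gens n) = down_closure (vertex_star n ` {1..n})"
proof (intro set_eqI iffI)
  fix \<sigma> assume "\<sigma> \<in> sr_complex (Kn_edges n) (JKn_gens n)"
  then have edges: "\<sigma> \<subseteq> Kn_edges n" and face: "\<And>g. g \<in> JKn_gens n \<Longrightarrow> \<not> g \<subseteq> \<sigma>"
    unfolding sr_complex_def by auto
  show "\<sigma> \<in> down_closure (vertex_star n ` {1..n})"
  proof (cases "\<sigma> = {}")
    case True
    then show ?thesis
      using assms unfolding down_closure_def by auto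
  next
    case False
    then obtain e where "e \<in> \<sigma>" by blast
    have edge: "f \<subseteq> {1..n}" "card f = 2" if "f \<in> \<sigma>" for f
      using mem_Kn_edges_iff[of f n] subsetD[OF edges that] by simp_all
    have intersecting: "f \<inter> f' \<noteq> {}" if "f \<in> \<sigma>" "f' \<in> \<sigma>" for f f'
    proof
      assume "f \<inter> f' = {}"
      then have "{f, f'} \<in> JKn_gens n"
        using that edges by (intro disjoint_edges_in_JKn_gens) auto
      then show False
        using face that by blast
    qed
    have triangle_free: "\<not> {{a, b}, {a, c}, {b, c}} \<subseteq> \<sigma>" if "distinct [a, b, c]" for a b c
    proof
      assume triangle: "{{a, b}, {a, c}, {b, c}} \<subseteq> \<sigma>"
      then have ab: "{a, b} \<in> \<sigma>" and bc: "{b, c} \<in> \<sigma>"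
        by simp_all
      have "{a, b, c} \<subseteq> {1..n}"
        using edge(1)[OF ab] edge(1)[OF bc] by simp
      then have "{{a, b}, {a, c}, {b, c}} \<in> JKn_gens n"
        using that by (intro triangle_in_JKn_gens)
      with triangle show False
        using face by blast
    qed
    have "\<exists>v. \<forall>f\<in>\<sigma>. v \<in> f"
      by (rule intersecting_triangle_free_common_vertex[OF edge(2) intersecting triangle_free \<open>e \<in> \<sigma>\<close>])
    then obtain v where v: "\<forall>f\<in>\<sigma>. v \<in> f" ..
    have "v \<in> {1..n}"
      using v \<open>e \<in> \<sigma>\<close> edge(1) by blast
    moreover have "\<sigma> \<subseteq> vertex_star n v"
      using edges v unfolding vertex_star_def by blast
    ultimately show ?thesis
      unfolding down_closure_def by blast
  qed
next
  fix \<sigma> assume "\<sigma> \<in> down_closure (vertex_star n ` {1..n})"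
  then obtain v where v: "\<sigma> \<subseteq> vertex_star n v"
    unfolding down_closure_def by blast
  then have "\<sigma> \<subseteq> Kn_edges n"
    unfolding vertex_star_def by blast
  moreover have "\<not> g \<subseteq> \<sigma>" if "g \<in> JKn_gens n" for g
    using JKn_gen_not_subset_vertex_star[OF that] v by blast
  ultimately show "\<sigma> \<in> sr_complex (Kn_edges n) (JKn_gens n)"
    unfolding sr_complex_def by blast
qed

lemma card_vertex_stars:
  assumes "n \<ge> 3"
  shows "card (vertex_star n ` {1..n}) = n"
proof -
  have "inj_on (vertex_star n) {1..n}"
    using vertex_star_subset_imp_eq[OF assms] by (intro inj_onI) blast
  then show ?thesis
    by (simp add: card_image)
qed

lemma card_Int_vertex_stars_le_1:
  assumes "F \<in> vertex_star n ` {1..n}" "G \<in> vertex_star n ` {1..n}" "F \<noteq> G"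
  shows "card (F \<inter> G) \<le> 1"
proof -
  obtain v w where "v \<in> {1..n}" "w \<in> {1..n}" "F = vertex_star n v" "G = vertex_star n w"
    using assms(1,2) by blast
  moreover have "v \<noteq> w"
    using calculation assms(3) by blast
  ultimately show ?thesis
    using vertex_star_Int by simp
qed

theorem lemma4p2:
  fixes n :: nat
  assumes "n \<ge> 3"
  defines "\<Delta> \<equiv> sr_complex (Kn_edges n) (JKn_gens n)"
  shows "card (facets \<Delta>) = n
    \<and> (\<forall>F\<in>facets \<Delta>. card F = n - 1 \<and> card (F \<inter> \<Union>(facets \<Delta> - {F})) = n - 1)
    \<and> face_poly \<Delta> = monom 1 (n - 1)
        + smult (int n) (\<Sum>k = 1..n - 1. monom (int ((n - 1) choose k)) (n - 1 - k))
        - monom (int (n choose 2)) (n - 2)"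
proof -
  let ?\<F> = "vertex_star n ` {1..n}"
  have "n \<ge> 2"
    using assms(1) by simp
  have \<Delta>: "\<Delta> = down_closure ?\<F>"
    unfolding \<Delta>_def using assms(1) by (simp add: sr_complex_JKn_eq_down_closure)
  have facets: "facets \<Delta> = ?\<F>"
    unfolding \<Delta> using vertex_star_subset_imp_eq[OF assms(1)] by (intro facets_down_closure) blast
  have facet: "\<forall>F\<in>facets \<Delta>. card F = n - 1 \<and> card (F \<inter> \<Union>(facets \<Delta> - {F})) = n - 1"
    unfolding facets
    using card_vertex_star vertex_star_subset_Union_others[OF assms(1)] by (auto simp: Int_absorb2)
  have "face_poly \<Delta> = monom 1 (n - 1) + monom (int (card (\<Union>?\<F>))) (n - 1 - 1)
      + (\<Sum>k = 2..n - 1. monom (int (card ?\<F> * ((n - 1) choose k))) (n - 1 - k))"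
    unfolding \<Delta> using assms(1) card_Int_vertex_stars_le_1
    by (intro face_poly_down_closure) (auto simp: finite_vertex_star card_vertex_star)
  also have "\<dots> = monom 1 (n - 1) + monom (int (n choose 2)) (n - 2)
      + (\<Sum>k = 2..n - 1. monom (int (n * ((n - 1) choose k))) (n - 1 - k))"
    unfolding Union_vertex_star card_Kn_edges card_vertex_stars[OF assms(1)]
    by (simp add: numeral_2_eq_2)
  also have "\<dots> = monom 1 (n - 1)
        + smult (int n) (\<Sum>k = 1..n - 1. monom (int ((n - 1) choose k)) (n - 1 - k))
        - monom (int (n choose 2)) (n - 2)"
    unfolding smult_sum_monom_choose_split[OF \<open>n \<ge> 2\<close>] mult_2 of_nat_add add_monom[symmetric]
    by simp
  finally show ?thesis
    using facets facet card_vertex_stars[OF assms(1)] by simp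
qed

end
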